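(* Let $\overrightarrow{W}$ be a Morse sequence on a simplicial complex $K$. Then for every $p$: (1) the homology spaces $H_p(K)$ and $H_p(\widehat W)$ are isomorphic vector spaces over $\mathbb{Z}_2$; (2) the cohomology spaces $H^p(K)$ and $H^p(\widehat W)$ are isomorphic vector spaces over $\mathbb{Z}_2$.
   Context: A simplicial complex $K$ is a finite collection of non-empty finite sets closed under taking non-empty subsets; $\dim\sigma=|\sigma|-1$, $K^{(p)}$ the set of $p$-simplices. A pair $(\sigma,\tau)$ with $\sigma\subsetneq\tau$ is a free pair for $K$ if $\tau$ is the only simplex other than $\sigma$ containing $\sigma$; $K$ is then an elementary expansion of $K\setminus\{\sigma,\tau\}$. If $\nu$ is a facet (maximal simplex) of $K$, $K$ is an elementary filling of $K\setminus\{\nu\}$. A Morse sequence on $K$ is a sequence $\langle\emptyset=K_0,\dots,K_k=K\rangle$ with each $K_i$ an elementary expansion or filling of $K_{i-1}$; simplices added by fillings are critical; for an expansion $K_i=K_{i-1}\cup\{\sigma,\tau\}$, $\sigma\subset\tau$, $\sigma$ is lower regular and $\tau$ upper regular. $\widehat W$ is the set of critical simplices. $K[p]$ is the $\mathbb{Z}_2$-vector space of subsets of $K^{(p)}$ (sum = symmetric difference, $0=\emptyset$), $\widehat W[p]=\{c\in K[p]:c\subseteq\widehat W\}$. For $\sigma\in K^{(p)}$, $\partial(\sigma)=\{\tau\in K^{(p-1)}:\tau\subset\sigma\}$, $\delta(\sigma)=\{\tau\in K^{(p+1)}:\sigma\subset\tau\}$, with linear extensions $\partial_p,\delta_p$;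 $H_p(K)=\ker\partial_p/\operatorname{im}\partial_{p+1}$ and $H^p(K)=\ker\delta_p/\operatorname{im}\delta_{p-1}$ (mod 2 simplicial homology and cohomology). The reference map $\curlywedge$ is the unique map assigning to each $p$-simplex an element of $\widehat W[p]$, extended linearly, with $\curlywedge(\nu)=\{\nu\}$ for critical $\nu$ and $\curlywedge(\tau)=0=\curlywedge(\partial(\tau))$ for upper regular $\tau$; the coreference map $\curlyvee$ is the unique such map with $\curlyvee(\nu)=\{\nu\}$ for critical $\nu$ and $\curlyvee(\sigma)=0=\curlyvee(\delta(\sigma))$ for lower regular $\sigma$. The critical complex is the chain complex $(\widehat W[p],\widehat\partial_p)$ with $\widehat\partial_p(c)=\curlywedge(\partial_p(c))$, and the cocritical complex is the cochain complex $(\widehat W[p],\widehat\delta_p)$ with $\widehat\delta_p(c)=\curlyvee(\delta_p(c))$ (these satisfy $\widehat\partial\circ\widehat\partial=0$ and $\widehat\delta\circ\widehat\delta=0$). $H_p(\widehat W)=\ker\widehat\partial_p/\operatorname{im}\widehat\partial_{p+1}$ and $H^p(\widehat W)=\ker\widehat\delta_p/\operatorname{im}\widehat\delta_{p-1}$. *)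

theory Defs
  imports Main
begin

text \<open>A p-simplex is a simplex of cardinality p+1.  Chains over Z_2 are sets of simplices,
  addition is symmetric difference, zero is the empty set.\<close>

definition simplicial_complex :: "'a set set \<Rightarrow> bool" where
  "simplicial_complex K \<longleftrightarrow> finite K \<and> (\<forall>\<sigma>\<in>K. finite \<sigma> \<and> \<sigma> \<noteq> {}) \<and>
     (\<forall>\<sigma>\<in>K. \<forall>\<tau>. \<tau> \<subseteq> \<sigma> \<and> \<tau> \<noteq> {} \<longrightarrow> \<tau> \<in> K)"

definition Kcard :: "'a set set \<Rightarrow> nat \<Rightarrow> 'a set set" where
  "Kcard K n = {\<sigma>\<in>K. card \<sigma> = n}"

definition free_pair :: "'a set set \<Rightarrow> 'a set \<Rightarrow> 'a set \<Rightarrow> bool" where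
  "free_pair K \<sigma> \<tau> \<longleftrightarrow> \<sigma> \<in> K \<and> \<tau> \<in> K \<and> \<sigma> \<subset> \<tau> \<and> (\<forall>\<rho>\<in>K. \<sigma> \<subseteq> \<rho> \<longrightarrow> \<rho> = \<sigma> \<or> \<rho> = \<tau>)"

definition facet :: "'a set set \<Rightarrow> 'a set \<Rightarrow> bool" where
  "facet K \<nu> \<longleftrightarrow> \<nu> \<in> K \<and> (\<forall>\<rho>\<in>K. \<nu> \<subseteq> \<rho> \<longrightarrow> \<rho> = \<nu>)"

definition elem_expansion :: "'a set set \<Rightarrow> 'a set set \<Rightarrow> bool" where
  "elem_expansion K' K \<longleftrightarrow> (\<exists>\<sigma> \<tau>. free_pair K \<sigma> \<tau> \<and> K' = K - {\<sigma>, \<tau>})"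

definition elem_filling :: "'a set set \<Rightarrow> 'a set set \<Rightarrow> bool" where
  "elem_filling K' K \<longleftrightarrow> (\<exists>\<nu>. facet K \<nu> \<and> K' = K - {\<nu>})"

definition morse_seq :: "'a set set \<Rightarrow> 'a set set list \<Rightarrow> bool" where
  "morse_seq K W \<longleftrightarrow> W \<noteq> [] \<and> W ! 0 = {} \<and> last W = K \<and>
     (\<forall>i. Suc i < length W \<longrightarrow> elem_expansion (W ! i) (W ! Suc i) \<or> elem_filling (W ! i) (W ! Suc i))"

definition critical :: "'a set set list \<Rightarrow> 'a set set" where
  "critical W = {\<nu>. \<exists>i. Suc i < length W \<and> W ! Suc i - W ! i = {\<nu>}}"

definition upper_regular :: "'a set set list \<Rightarrow> 'a set set" where
  "upper_regular W = {\<tau>. \<exists>i \<sigma>. Suc i < length W \<and> \<sigma> \<subset> \<tau> \<and> W ! Suc i - W ! i = {\<sigma>, \<tau>}}"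

definition lower_regular :: "'a set set list \<Rightarrow> 'a set set" where
  "lower_regular W = {\<sigma>. \<exists>i \<tau>. Suc i < length W \<and> \<sigma> \<subset> \<tau> \<and> W ! Suc i - W ! i = {\<sigma>, \<tau>}}"

text \<open>Linear (Z_2) extension of a map from simplices to chains.\<close>
definition lin :: "('b \<Rightarrow> 'c set) \<Rightarrow> 'b set \<Rightarrow> 'c set" where
  "lin r c = {x. odd (card {\<sigma>\<in>c. x \<in> r \<sigma>})}"

definition bd1 :: "'a set set \<Rightarrow> 'a set \<Rightarrow> 'a set set" where
  "bd1 K \<sigma> = {\<tau>\<in>K. \<tau> \<subset> \<sigma> \<and> card \<tau> + 1 = card \<sigma>}"

definition cobd1 :: "'a set set \<Rightarrow> 'a set \<Rightarrow> 'a set set" where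
  "cobd1 K \<sigma> = {\<tau>\<in>K. \<sigma> \<subset> \<tau> \<and> card \<tau> = card \<sigma> + 1}"

definition bd :: "'a set set \<Rightarrow> 'a set set \<Rightarrow> 'a set set" where
  "bd K c = lin (bd1 K) c"

definition cobd :: "'a set set \<Rightarrow> 'a set set \<Rightarrow> 'a set set" where
  "cobd K c = lin (cobd1 K) c"

text \<open>Reference and coreference maps (defined as the unique maps with the stated properties;
  outside K they are set to 0 to make them unique as HOL functions).\<close>
definition is_ref :: "'a set set \<Rightarrow> 'a set set list \<Rightarrow> ('a set \<Rightarrow> 'a set set) \<Rightarrow> bool" where
  "is_ref K W r \<longleftrightarrow> (\<forall>\<sigma>. \<sigma> \<notin> K \<longrightarrow> r \<sigma> = {}) \<and>
     (\<forall>\<sigma>\<in>K. r \<sigma> \<subseteq> critical W \<inter> Kcard K (card \<sigma>)) \<and>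
     (\<forall>\<nu>\<in>critical W. r \<nu> = {\<nu>}) \<and>
     (\<forall>\<tau>\<in>upper_regular W. r \<tau> = {} \<and> lin r (bd1 K \<tau>) = {})"

definition reference :: "'a set set \<Rightarrow> 'a set set list \<Rightarrow> 'a set \<Rightarrow> 'a set set" where
  "reference K W = (THE r. is_ref K W r)"

definition is_coref :: "'a set set \<Rightarrow> 'a set set list \<Rightarrow> ('a set \<Rightarrow> 'a set set) \<Rightarrow> bool" where
  "is_coref K W r \<longleftrightarrow> (\<forall>\<sigma>. \<sigma> \<notin> K \<longrightarrow> r \<sigma> = {}) \<and>
     (\<forall>\<sigma>\<in>K. r \<sigma> \<subseteq> critical W \<inter> Kcard K (card \<sigma>)) \<and>
     (\<forall>\<nu>\<in>critical W. r \<nu> = {\<nu>}) \<and>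
     (\<forall>\<sigma>\<in>lower_regular W. r \<sigma> = {} \<and> lin r (cobd1 K \<sigma>) = {})"

definition coreference :: "'a set set \<Rightarrow> 'a set set list \<Rightarrow> 'a set \<Rightarrow> 'a set set" where
  "coreference K W = (THE r. is_coref K W r)"

definition crit_bd :: "'a set set \<Rightarrow> 'a set set list \<Rightarrow> 'a set set \<Rightarrow> 'a set set" where
  "crit_bd K W c = lin (reference K W) (bd K c)"

definition crit_cobd :: "'a set set \<Rightarrow> 'a set set list \<Rightarrow> 'a set set \<Rightarrow> 'a set set" where
  "crit_cobd K W c = lin (coreference K W) (cobd K c)"

text \<open>Quotient Z/B of Z_2-spaces of chains, as the set of cosets z + B.\<close>
definition quot_space :: "'b set set \<Rightarrow> 'b set set \<Rightarrow> 'b set set set" where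
  "quot_space Z B = {{z \<union> b - (z \<inter> b) | b. b \<in> B} | z. z \<in> Z}"

definition coset_add :: "'b set set \<Rightarrow> 'b set set \<Rightarrow> 'b set set" where
  "coset_add A B = {x \<union> y - (x \<inter> y) | x y. x \<in> A \<and> y \<in> B}"

text \<open>Isomorphism of Z_2-vector spaces = additive bijection (scalars are 0 and 1).\<close>
definition vs_iso :: "'b set set set \<Rightarrow> 'c set set set \<Rightarrow> bool" where
  "vs_iso H1 H2 \<longleftrightarrow> (\<exists>f. bij_betw f H1 H2 \<and>
     (\<forall>A\<in>H1. \<forall>B\<in>H1. f (coset_add A B) = coset_add (f A) (f B)))"

definition homology :: "'a set set \<Rightarrow> nat \<Rightarrow> 'a set set set set" where
  "homology K p = quot_space {c \<in> Pow (Kcard K (p+1)). bd K c = {}} (bd K ` Pow (Kcard K (p+2)))"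

definition cohomology :: "'a set set \<Rightarrow> nat \<Rightarrow> 'a set set set set" where
  "cohomology K p = quot_space {c \<in> Pow (Kcard K (p+1)). cobd K c = {}} (cobd K ` Pow (Kcard K p))"

definition crit_homology :: "'a set set \<Rightarrow> 'a set set list \<Rightarrow> nat \<Rightarrow> 'a set set set set" where
  "crit_homology K W p = quot_space
     {c \<in> Pow (critical W \<inter> Kcard K (p+1)). crit_bd K W c = {}}
     (crit_bd K W ` Pow (critical W \<inter> Kcard K (p+2)))"

definition crit_cohomology :: "'a set set \<Rightarrow> 'a set set list \<Rightarrow> nat \<Rightarrow> 'a set set set set" where
  "crit_cohomology K W p = quot_space
     {c \<in> Pow (critical W \<inter> Kcard K (p+1)). crit_cobd K W c = {}}
     (crit_cobd K W ` Pow (critical W \<inter> Kcard K p))"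

end

theory Submission
  imports Defs
begin

text \<open>The reference map \<open>r\<close> is the identity on critical simplices and kills the upper regular
  simplices together with their boundaries; on a lower regular simplex \<open>\<sigma>\<close> this forces
  \<open>r \<sigma> = r (\<partial>(mate \<sigma>) - \<sigma>)\<close>. The other faces of \<open>mate \<sigma>\<close> were added before \<open>\<sigma>\<close>, so this is a
  recursion along the Morse sequence, which gives existence and uniqueness of \<open>r\<close>. The same
  recursion shows that \<open>c + r c\<close> always lies in the span of the upper regular simplices and of
  their boundaries, and the boundary is injective on chains of upper regular simplices (the
  most recently added one is the only one whose boundary contains its lower partner). Hence
  \<open>r \<partial> r = r \<partial>\<close>, \<open>r\<close> maps cycles onto critical cycles and boundaries into critical boundaries, and a
  cycle whose image is a critical boundary is a boundary; so \<open>r\<close> induces the isomorphism in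
  homology. Cohomology is the same argument for the coboundary, with the order of the sequence
  reversed and the roles of lower and upper regular simplices exchanged.\<close>

section \<open>Chains with coefficients in \<open>\<int>\<^sub>2\<close>\<close>

lemma odd_card_sym_diff:
  assumes "finite X" "finite Y"
  shows "odd (card (sym_diff X Y)) \<longleftrightarrow> odd (card X) \<noteq> odd (card Y)"
proof -
  have "card (sym_diff X Y) = card (X - Y) + card (Y - X)"
    by (rule card_Un_disjoint) (use assms in auto)
  moreover have "card X = card (X \<inter> Y) + card (X - Y)" "card Y = card (X \<inter> Y) + card (Y - X)"
    using card_Int_Diff[of X Y] card_Int_Diff[of Y X] assms by (simp_all add: Int_commute)
  ultimately show ?thesis by auto
qed

lemma lin_empty [simp]: "lin r {} = {}"
  by (simp add: lin_def)

lemma lin_singleton [simp]: "lin r {a} = r a"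
proof -
  have "{\<sigma>\<in>{a}. x \<in> r \<sigma>} = (if x \<in> r a then {a} else {})" for x
    by auto
  then show ?thesis
    unfolding lin_def by auto
qed

lemma lin_sym_diff:
  assumes "finite x" "finite y"
  shows "lin r (sym_diff x y) = sym_diff (lin r x) (lin r y)"
proof -
  have "{\<sigma> \<in> sym_diff x y. a \<in> r \<sigma>} = sym_diff {\<sigma>\<in>x. a \<in> r \<sigma>} {\<sigma>\<in>y. a \<in> r \<sigma>}" for a
    by blast
  then show ?thesis
    using assms unfolding lin_def by (auto simp: odd_card_sym_diff)
qed

lemma lin_insert:
  assumes "finite F" "a \<notin> F"
  shows "lin r (insert a F) = sym_diff (r a) (lin r F)"
proof -
  have "insert a F = sym_diff {a} F"
    using assms(2) by blast
  then show ?thesis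
    using lin_sym_diff[of "{a}" F r] assms(1) by simp
qed

lemma lin_cong:
  assumes "\<And>s. s \<in> F \<Longrightarrow> r s = q s"
  shows "lin r F = lin q F"
proof -
  have "{\<sigma>\<in>F. x \<in> r \<sigma>} = {\<sigma>\<in>F. x \<in> q \<sigma>}" for x
    using assms by auto
  then show ?thesis
    unfolding lin_def by simp
qed

lemma lin_eq_emptyI:
  assumes "\<And>s. s \<in> F \<Longrightarrow> r s = {}"
  shows "lin r F = {}"
proof -
  have "{\<sigma>\<in>F. x \<in> r \<sigma>} = {}" for x
    using assms by auto
  then show ?thesis
    unfolding lin_def by (simp only:) simp
qed

lemma lin_subset_UN: "lin r F \<subseteq> (\<Union>s\<in>F. r s)"
proof
  fix x
  assume "x \<in> lin r F"
  then have "{\<sigma>\<in>F. x \<in> r \<sigma>} \<noteq> {}"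
    unfolding lin_def by (auto simp del: Collect_empty_eq)
  then show "x \<in> (\<Union>s\<in>F. r s)"
    by blast
qed

lemma lin_sym_diff_fun:
  assumes "finite F"
  shows "lin (\<lambda>s. sym_diff (r s) (q s)) F = sym_diff (lin r F) (lin q F)"
  using assms by (induction F rule: finite_induct) (simp_all add: lin_insert, blast)

lemma lin_singleton_fun:
  assumes "finite F"
  shows "lin (\<lambda>s. {s}) F = F"
  using assms by (induction F rule: finite_induct) (auto simp: lin_insert)

lemma lin_sym_diff_singleton:
  assumes "finite F"
  shows "lin (\<lambda>s. sym_diff {s} (r s)) F = sym_diff F (lin r F)"
  using lin_sym_diff_fun[OF assms, of "\<lambda>s. {s}" r] lin_singleton_fun[OF assms] by simp

lemma lin_lin:
  assumes "finite B" "\<And>b. b \<in> B \<Longrightarrow> finite (h b)"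
  shows "lin f (lin h B) = lin (\<lambda>b. lin f (h b)) B"
  using assms
proof (induction B rule: finite_induct)
  case (insert a F)
  have "finite (lin h F)"
    by (rule finite_subset[OF lin_subset_UN]) (use insert in auto)
  with insert show ?case
    by (simp add: lin_insert lin_sym_diff)
qed simp

lemma lin_in_subspace:
  assumes "finite F" "{} \<in> N" "\<And>x y. x \<in> N \<Longrightarrow> y \<in> N \<Longrightarrow> sym_diff x y \<in> N"
    and "\<And>s. s \<in> F \<Longrightarrow> h s \<in> N"
  shows "lin h F \<in> N"
  using assms(1,4) by (induction F rule: finite_induct) (simp_all add: lin_insert assms(2,3))

section \<open>Subspaces and quotients\<close>

lemma Un_Diff_Int_eq_sym_diff: "x \<union> y - x \<inter> y = sym_diff x y"
  by blast

definition z2_subspace :: "'b set set \<Rightarrow> bool" where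
  "z2_subspace N \<longleftrightarrow> {} \<in> N \<and> (\<forall>x\<in>N. \<forall>y\<in>N. sym_diff x y \<in> N)"

definition coset :: "'b set set \<Rightarrow> 'b set \<Rightarrow> 'b set set" where
  "coset B z = sym_diff z ` B"

lemma z2_subspace_Pow: "z2_subspace (Pow A)"
  unfolding z2_subspace_def by blast

lemma z2_subspace_kernel:
  assumes "z2_subspace N" and "\<And>x y. x \<in> N \<Longrightarrow> y \<in> N \<Longrightarrow> f (sym_diff x y) = sym_diff (f x) (f y)"
  shows "z2_subspace {x\<in>N. f x = {}}"
proof -
  have "f {} = sym_diff (f {}) (f {})"
    using assms unfolding z2_subspace_def by (metis Un_absorb Diff_cancel)
  then show ?thesis
    using assms unfolding z2_subspace_def by auto
qed

lemma z2_subspace_image: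
  assumes N: "z2_subspace N" and f: "\<And>x y. x \<in> N \<Longrightarrow> y \<in> N \<Longrightarrow> f (sym_diff x y) = sym_diff (f x) (f y)"
  shows "z2_subspace (f ` N)"
  unfolding z2_subspace_def
proof (intro conjI ballI)
  have "f {} = sym_diff (f {}) (f {})"
    using f[of "{}" "{}"] N unfolding z2_subspace_def by simp
  then show "{} \<in> f ` N"
    using N unfolding z2_subspace_def by force
  fix u v
  assume "u \<in> f ` N" "v \<in> f ` N"
  then obtain x y where "x \<in> N" "y \<in> N" "u = f x" "v = f y"
    by blast
  then show "sym_diff u v \<in> f ` N"
    using N f unfolding z2_subspace_def by (metis image_eqI)
qed

lemma quot_space_eq_image: "quot_space Z B = coset B ` Z"
  unfolding quot_space_def coset_def Un_Diff_Int_eq_sym_diff by blast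

lemma self_in_coset: "z2_subspace B \<Longrightarrow> z \<in> coset B z"
  unfolding z2_subspace_def coset_def by (rule image_eqI[of _ _ "{}"]) simp_all

lemma coset_subset:
  assumes "z2_subspace B" "sym_diff z z' \<in> B"
  shows "coset B z \<subseteq> coset B z'"
proof
  fix w
  assume "w \<in> coset B z"
  then obtain b where b: "b \<in> B" "w = sym_diff z b"
    unfolding coset_def by (rule imageE)
  then have "sym_diff (sym_diff z z') b \<in> B"
    using assms unfolding z2_subspace_def by blast
  moreover have "w = sym_diff z' (sym_diff (sym_diff z z') b)"
    using b(2) by auto
  ultimately show "w \<in> coset B z'"
    unfolding coset_def by (rule rev_image_eqI)
qed

lemma coset_eq_iff:
  assumes "z2_subspace B"
  shows "coset B z = coset B z' \<longleftrightarrow> sym_diff z z' \<in> B"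
proof
  assume "coset B z = coset B z'"
  then have "z \<in> coset B z'"
    using self_in_coset[OF assms] by metis
  then obtain b where "b \<in> B" "z = sym_diff z' b"
    unfolding coset_def by (rule imageE)
  moreover from this(2) have "sym_diff z z' = b"
    by auto
  ultimately show "sym_diff z z' \<in> B"
    by simp
next
  assume "sym_diff z z' \<in> B"
  moreover have "sym_diff z' z = sym_diff z z'"
    by (rule Un_commute)
  ultimately show "coset B z = coset B z'"
    by (intro equalityI coset_subset[OF assms]) simp_all
qed

lemma coset_add_coset:
  assumes "z2_subspace B"
  shows "coset_add (coset B z) (coset B z') = coset B (sym_diff z z')"
proof (intro equalityI subsetI)
  fix w
  assume "w \<in> coset_add (coset B z) (coset B z')"
  then obtain b b' where b: "b \<in> B" "b' \<in> B" and w: "w = sym_diff (sym_diff z b) (sym_diff z' b')"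
    unfolding coset_add_def coset_def Un_Diff_Int_eq_sym_diff by blast
  have "sym_diff b b' \<in> B"
    using assms b unfolding z2_subspace_def by blast
  moreover have "w = sym_diff (sym_diff z z') (sym_diff b b')"
    using w by auto
  ultimately show "w \<in> coset B (sym_diff z z')"
    unfolding coset_def by (rule rev_image_eqI)
next
  fix w
  assume "w \<in> coset B (sym_diff z z')"
  then obtain b where b: "b \<in> B" and w: "w = sym_diff (sym_diff z z') b"
    unfolding coset_def by (rule imageE)
  have "sym_diff z b \<in> coset B z"
    using b unfolding coset_def by (rule imageI)
  moreover have "z' \<in> coset B z'"
    by (rule self_in_coset[OF assms])
  moreover have "w = sym_diff (sym_diff z b) z'"
    using w by auto
  ultimately show "w \<in> coset_add (coset B z) (coset B z')"
    unfolding coset_add_def Un_Diff_Int_eq_sym_diff by blast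
qed

lemma coset_image_eq_iff:
  assumes B: "z2_subspace B" and B': "z2_subspace B'" and Z: "z2_subspace Z"
    and additive: "\<And>x y. x \<in> Z \<Longrightarrow> y \<in> Z \<Longrightarrow> \<phi> (sym_diff x y) = sym_diff (\<phi> x) (\<phi> y)"
    and maps_B: "\<And>b. b \<in> B \<Longrightarrow> \<phi> b \<in> B'"
    and reflects_B: "\<And>z. z \<in> Z \<Longrightarrow> \<phi> z \<in> B' \<Longrightarrow> z \<in> B"
    and "x \<in> Z" "y \<in> Z"
  shows "coset B' (\<phi> x) = coset B' (\<phi> y) \<longleftrightarrow> coset B x = coset B y"
proof -
  have "sym_diff x y \<in> Z"
    using Z assms(7,8) unfolding z2_subspace_def by blast
  have "coset B' (\<phi> x) = coset B' (\<phi> y) \<longleftrightarrow> \<phi> (sym_diff x y) \<in> B'"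
    using additive[OF assms(7,8)] coset_eq_iff[OF B'] by simp
  also have "\<dots> \<longleftrightarrow> sym_diff x y \<in> B"
    using maps_B reflects_B \<open>sym_diff x y \<in> Z\<close> by blast
  finally show ?thesis
    using coset_eq_iff[OF B] by simp
qed

lemma ex_induced_coset_map:
  assumes "\<And>x y. x \<in> Z \<Longrightarrow> y \<in> Z \<Longrightarrow> coset B x = coset B y \<Longrightarrow> coset B' (\<phi> x) = coset B' (\<phi> y)"
  shows "\<exists>f. \<forall>z\<in>Z. f (coset B z) = coset B' (\<phi> z)"
proof (intro exI ballI)
  fix z
  assume "z \<in> Z"
  let ?z = "SOME z'. z' \<in> Z \<and> coset B z = coset B z'"
  have "?z \<in> Z \<and> coset B z = coset B ?z"
    by (rule someI[of _ z]) (use \<open>z \<in> Z\<close> in simp)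
  then show "coset B' (\<phi> ?z) = coset B' (\<phi> z)"
    using assms[OF \<open>z \<in> Z\<close>, of ?z] by simp
qed

lemma vs_iso_quot_spaceI:
  assumes B: "z2_subspace B" and B': "z2_subspace B'" and Z: "z2_subspace Z"
    and maps_to: "\<And>z. z \<in> Z \<Longrightarrow> \<phi> z \<in> Z'"
    and additive: "\<And>x y. x \<in> Z \<Longrightarrow> y \<in> Z \<Longrightarrow> \<phi> (sym_diff x y) = sym_diff (\<phi> x) (\<phi> y)"
    and maps_B: "\<And>b. b \<in> B \<Longrightarrow> \<phi> b \<in> B'"
    and onto: "\<And>z'. z' \<in> Z' \<Longrightarrow> \<exists>z\<in>Z. \<phi> z = z'"
    and reflects_B: "\<And>z. z \<in> Z \<Longrightarrow> \<phi> z \<in> B' \<Longrightarrow> z \<in> B"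
  shows "vs_iso (quot_space Z B) (quot_space Z' B')"
proof -
  note coset_\<phi>_iff = coset_image_eq_iff[where \<phi> = \<phi>, OF B B' Z additive maps_B reflects_B]
  have "\<exists>f. \<forall>z\<in>Z. f (coset B z) = coset B' (\<phi> z)"
    by (rule ex_induced_coset_map) (simp add: coset_\<phi>_iff)
  then obtain f where f_coset: "\<And>z. z \<in> Z \<Longrightarrow> f (coset B z) = coset B' (\<phi> z)"
    by blast
  have "inj_on f (coset B ` Z)"
    by (rule inj_onI) (auto simp: f_coset coset_\<phi>_iff)
  moreover have "f ` coset B ` Z = coset B' ` \<phi> ` Z"
    unfolding image_image using f_coset by (rule image_cong[OF refl])
  moreover have "\<phi> ` Z = Z'"
    using maps_to onto by blast
  moreover have "f (coset_add A A') = coset_add (f A) (f A')"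
    if A: "A \<in> coset B ` Z" and A': "A' \<in> coset B ` Z" for A A'
  proof -
    obtain x y where "x \<in> Z" "y \<in> Z" "A = coset B x" "A' = coset B y"
      using A A' by blast
    moreover have "sym_diff x y \<in> Z"
      using Z calculation(1,2) unfolding z2_subspace_def by blast
    ultimately show ?thesis
      using additive f_coset by (simp add: coset_add_coset[OF B] coset_add_coset[OF B'])
  qed
  ultimately show ?thesis
    unfolding vs_iso_def quot_space_eq_image bij_betw_def by (intro exI[of _ f]) simp
qed

section \<open>Acyclic matchings and reference maps\<close>

text \<open>Common form of \<open>is_ref\<close> and \<open>is_coref\<close>: the coreference map is obtained
  with the coboundary for \<open>d1\<close> and the lower regular simplices for \<open>Up\<close>.\<close>

definition is_ref_map ::
  "'b set \<Rightarrow> 'b set \<Rightarrow> 'b set \<Rightarrow> ('b \<Rightarrow> 'b set) \<Rightarrow> ('b \<Rightarrow> nat) \<Rightarrow> ('b \<Rightarrow> 'b set) \<Rightarrow> bool" where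
  "is_ref_map S Cr Up d1 g r \<longleftrightarrow> (\<forall>s. s \<notin> S \<longrightarrow> r s = {}) \<and> (\<forall>s\<in>S. r s \<subseteq> {c\<in>Cr. g c = g s}) \<and>
     (\<forall>\<nu>\<in>Cr. r \<nu> = {\<nu>}) \<and> (\<forall>\<tau>\<in>Up. r \<tau> = {} \<and> lin r (d1 \<tau>) = {})"

text \<open>An abstract Morse sequence: \<open>S\<close> is a basis of a chain complex graded by \<open>g\<close> with
  boundary \<open>d1\<close>, \<open>Cr\<close>, \<open>Lo\<close>, \<open>Up\<close> are the critical, lower and upper regular elements, and \<open>idx\<close> is
  the step at which an element is added. The last two assumptions are all that is used of the
  order: the mate of \<open>\<tau>\<close> is the most recently added face of \<open>\<tau>\<close>, and every other upper element
  having it as a face comes after \<open>\<tau>\<close>.\<close>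

locale acyclic_matching =
  fixes S :: "'b set" and d1 :: "'b \<Rightarrow> 'b set" and g :: "'b \<Rightarrow> nat" and idx :: "'b \<Rightarrow> nat"
    and Cr Lo Up :: "'b set" and mate :: "'b \<Rightarrow> 'b"
  assumes finite_S: "finite S"
    and d1_subset: "s \<in> S \<Longrightarrow> d1 s \<subseteq> S"
    and g_d1: "s \<in> S \<Longrightarrow> t \<in> d1 s \<Longrightarrow> g s = Suc (g t)"
    and d1_d1: "s \<in> S \<Longrightarrow> lin d1 (d1 s) = {}"
    and S_eq: "S = Cr \<union> Lo \<union> Up"
    and Cr_Lo: "Cr \<inter> Lo = {}" and Cr_Up: "Cr \<inter> Up = {}" and Lo_Up: "Lo \<inter> Up = {}"
    and mate_Up: "\<tau> \<in> Up \<Longrightarrow> mate \<tau> \<in> Lo \<and> mate \<tau> \<in> d1 \<tau> \<and> mate (mate \<tau>) = \<tau>"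
    and mate_Lo: "\<sigma> \<in> Lo \<Longrightarrow> mate \<sigma> \<in> Up \<and> mate (mate \<sigma>) = \<sigma>"
    and idx_d1_mate: "\<tau> \<in> Up \<Longrightarrow> \<rho> \<in> d1 \<tau> \<Longrightarrow> \<rho> \<noteq> mate \<tau> \<Longrightarrow> idx \<rho> < idx (mate \<tau>)"
    and idx_mate_d1: "\<tau> \<in> Up \<Longrightarrow> \<tau>' \<in> Up \<Longrightarrow> mate \<tau> \<in> d1 \<tau>' \<Longrightarrow> \<tau>' = \<tau> \<or> idx \<tau> < idx \<tau>'"
begin

lemma finite_subset_S: "x \<subseteq> S \<Longrightarrow> finite x"
  using finite_S finite_subset by blast

lemma finite_d1: "s \<in> S \<Longrightarrow> finite (d1 s)"
  using d1_subset finite_subset_S by blast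

lemma lin_d1_subset: "x \<subseteq> S \<Longrightarrow> lin d1 x \<subseteq> S"
  using lin_subset_UN[of d1 x] d1_subset by blast

lemma g_lin_d1: "x \<subseteq> S \<Longrightarrow> \<forall>s\<in>x. g s = Suc n \<Longrightarrow> t \<in> lin d1 x \<Longrightarrow> g t = n"
  using lin_subset_UN[of d1 x] g_d1 by fastforce

lemma lin_d1_g_0: "x \<subseteq> S \<Longrightarrow> \<forall>s\<in>x. g s = 0 \<Longrightarrow> lin d1 x = {}"
  by (rule lin_eq_emptyI) (use g_d1 in fastforce)

lemma lin_d1_sym_diff: "x \<subseteq> S \<Longrightarrow> y \<subseteq> S \<Longrightarrow> lin d1 (sym_diff x y) = sym_diff (lin d1 x) (lin d1 y)"
  by (rule lin_sym_diff) (rule finite_subset_S, assumption)+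

lemma lin_d1_lin_d1: "x \<subseteq> S \<Longrightarrow> lin d1 (lin d1 x) = {}"
proof -
  assume x: "x \<subseteq> S"
  have "lin d1 (lin d1 x) = lin (\<lambda>s. lin d1 (d1 s)) x"
    by (rule lin_lin) (use x finite_subset_S finite_d1 in auto)
  also have "\<dots> = {}"
    by (rule lin_eq_emptyI) (use x d1_d1 in blast)
  finally show ?thesis .
qed

lemma Cr_subset: "Cr \<subseteq> S" and Lo_subset: "Lo \<subseteq> S" and Up_subset: "Up \<subseteq> S"
  using S_eq by auto

lemma Lo_in_d1_mate: "\<sigma> \<in> Lo \<Longrightarrow> \<sigma> \<in> d1 (mate \<sigma>)"
  using mate_Lo mate_Up by metis

lemma other_face_of_mate:
  assumes "\<sigma> \<in> Lo" "\<rho> \<in> d1 (mate \<sigma>) - {\<sigma>}"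
  shows "idx \<rho> < idx \<sigma>" "\<rho> \<in> S" "g \<rho> = g \<sigma>"
proof -
  have \<tau>: "mate \<sigma> \<in> Up" "mate (mate \<sigma>) = \<sigma>" "mate \<sigma> \<in> S"
    using mate_Lo[OF assms(1)] Up_subset by auto
  show "idx \<rho> < idx \<sigma>" "\<rho> \<in> S"
    using idx_d1_mate[OF \<tau>(1)] \<tau>(2) d1_subset[OF \<tau>(3)] assms(2) by auto
  have "g (mate \<sigma>) = Suc (g \<sigma>)" "g (mate \<sigma>) = Suc (g \<rho>)"
    using g_d1[OF \<tau>(3) Lo_in_d1_mate[OF assms(1)]] g_d1[OF \<tau>(3), of \<rho>] assms(2) by auto
  then show "g \<rho> = g \<sigma>"
    by simp
qed

lemma lin_d1_Up_eq_empty_iff: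
  assumes "\<tau> \<in> Up"
  shows "lin r (d1 \<tau>) = {} \<longleftrightarrow> r (mate \<tau>) = lin r (d1 \<tau> - {mate \<tau>})"
proof -
  have "finite (d1 \<tau>)" "mate \<tau> \<in> d1 \<tau>"
    using finite_d1 mate_Up assms Up_subset by auto
  then have "lin r (d1 \<tau>) = sym_diff (r (mate \<tau>)) (lin r (d1 \<tau> - {mate \<tau>}))"
    using lin_insert[of "d1 \<tau> - {mate \<tau>}" "mate \<tau>" r] by (simp add: insert_absorb)
  then show ?thesis
    by blast
qed

text \<open>By \<open>other_face_of_mate\<close>, this is a recursion along \<open>idx\<close>.\<close>

lemma ref_map_Lo:
  assumes "is_ref_map S Cr Up d1 g r" "\<sigma> \<in> Lo"
  shows "r \<sigma> = lin r (d1 (mate \<sigma>) - {\<sigma>})"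
  using lin_d1_Up_eq_empty_iff[of "mate \<sigma>" r] mate_Lo[OF assms(2)] assms(1)
  unfolding is_ref_map_def by simp

lemma ref_map_unique:
  assumes r: "is_ref_map S Cr Up d1 g r" and r': "is_ref_map S Cr Up d1 g r'"
  shows "r = r'"
proof
  fix s
  show "r s = r' s"
  proof (cases "s \<in> S")
    case True
    then show ?thesis
    proof (induction "idx s" arbitrary: s rule: less_induct)
      case less
      consider "s \<in> Cr \<union> Up" | "s \<in> Lo"
        using less.prems S_eq by blast
      then show ?case
      proof cases
        case 1
        then show ?thesis
          using r r' unfolding is_ref_map_def by auto
      next
        case 2
        have "lin r (d1 (mate s) - {s}) = lin r' (d1 (mate s) - {s})"
          by (rule lin_cong) (use less.hyps other_face_of_mate[OF 2] in blast)
        then show ?thesis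
          using ref_map_Lo[OF r 2] ref_map_Lo[OF r' 2] by simp
      qed
    qed
  next
    case False
    then show ?thesis
      using r r' unfolding is_ref_map_def by auto
  qed
qed

definition partial_ref_map :: "nat \<Rightarrow> ('b \<Rightarrow> 'b set) \<Rightarrow> bool" where
  "partial_ref_map n r \<longleftrightarrow> (\<forall>s\<in>S. idx s < n \<longrightarrow>
     (s \<in> Cr \<longrightarrow> r s = {s}) \<and> (s \<in> Up \<longrightarrow> r s = {}) \<and>
     (s \<in> Lo \<longrightarrow> r s = lin r (d1 (mate s) - {s})) \<and> r s \<subseteq> {c\<in>Cr. g c = g s})"

lemma partial_ref_map_lin_subset:
  assumes r: "partial_ref_map n r" and "s \<in> Lo" "idx s \<le> n"
  shows "lin r (d1 (mate s) - {s}) \<subseteq> {c\<in>Cr. g c = g s}"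
proof -
  have "r \<rho> \<subseteq> {c\<in>Cr. g c = g s}" if "\<rho> \<in> d1 (mate s) - {s}" for \<rho>
  proof -
    note \<rho> = other_face_of_mate[OF \<open>s \<in> Lo\<close> that]
    have "idx \<rho> < n"
      using \<rho>(1) \<open>idx s \<le> n\<close> by simp
    then have "r \<rho> \<subseteq> {c\<in>Cr. g c = g \<rho>}"
      using r \<rho>(2) unfolding partial_ref_map_def by blast
    then show ?thesis
      using \<rho>(3) by simp
  qed
  then show ?thesis
    using lin_subset_UN[of r "d1 (mate s) - {s}"] by blast
qed

lemma partial_ref_map_Suc:
  assumes r: "partial_ref_map n r"
  shows "\<exists>r'. partial_ref_map (Suc n) r'"
proof -
  define r' where "r' s = (if idx s \<noteq> n then r s else if s \<in> Cr then {s}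
    else if s \<in> Lo then lin r (d1 (mate s) - {s}) else {})" for s
  have lin_r': "lin r' (d1 (mate s) - {s}) = lin r (d1 (mate s) - {s})"
    if "s \<in> Lo" "idx s \<le> n" for s
    by (rule lin_cong) (use other_face_of_mate(1)[OF that(1)] that(2) in \<open>force simp: r'_def\<close>)
  have "partial_ref_map (Suc n) r'"
    unfolding partial_ref_map_def
  proof (intro ballI impI)
    fix s
    assume "s \<in> S" "idx s < Suc n"
    then consider "idx s = n" | "idx s < n"
      by linarith
    then show "(s \<in> Cr \<longrightarrow> r' s = {s}) \<and> (s \<in> Up \<longrightarrow> r' s = {}) \<and>
      (s \<in> Lo \<longrightarrow> r' s = lin r' (d1 (mate s) - {s})) \<and> r' s \<subseteq> {c\<in>Cr. g c = g s}"
    proof cases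
      case 1
      then show ?thesis
        using lin_r' partial_ref_map_lin_subset[OF r] Cr_Lo Cr_Up Lo_Up \<open>s \<in> S\<close> S_eq
        by (auto simp: r'_def)
    next
      case 2
      then show ?thesis
        using r \<open>s \<in> S\<close> lin_r'[of s] unfolding partial_ref_map_def by (auto simp: r'_def)
    qed
  qed
  then show ?thesis
    by blast
qed

lemma ex_partial_ref_map: "\<exists>r. partial_ref_map n r"
proof (induction n)
  case 0
  then show ?case
    by (simp add: partial_ref_map_def)
next
  case (Suc n)
  then show ?case
    using partial_ref_map_Suc by blast
qed

lemma ex_ref_map: "\<exists>r. is_ref_map S Cr Up d1 g r"
proof -
  obtain n where n: "\<forall>s\<in>S. idx s < n"
    using finite_imageI[OF finite_S, of idx] unfolding finite_nat_set_iff_bounded by auto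
  obtain r where r: "partial_ref_map n r"
    using ex_partial_ref_map by blast
  define r0 where "r0 s = (if s \<in> S then r s else {})" for s
  have r0: "s \<in> S \<Longrightarrow> (s \<in> Cr \<longrightarrow> r0 s = {s}) \<and> (s \<in> Up \<longrightarrow> r0 s = {}) \<and>
      (s \<in> Lo \<longrightarrow> r0 s = lin r0 (d1 (mate s) - {s})) \<and> r0 s \<subseteq> {c\<in>Cr. g c = g s}" for s
  proof -
    have "lin r0 (d1 (mate s) - {s}) = lin r (d1 (mate s) - {s})" if "s \<in> Lo"
      by (rule lin_cong) (use other_face_of_mate(2)[OF that] in \<open>simp add: r0_def\<close>)
    then show "s \<in> S \<Longrightarrow> ?thesis"
      using r n unfolding partial_ref_map_def r0_def by simp
  qed
  have "lin r0 (d1 \<tau>) = {}" if "\<tau> \<in> Up" for \<tau>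
  proof -
    have "mate \<tau> \<in> Lo" "mate (mate \<tau>) = \<tau>"
      using mate_Up[OF that] by simp_all
    then have "r0 (mate \<tau>) = lin r0 (d1 \<tau> - {mate \<tau>})"
      using r0[of "mate \<tau>"] Lo_subset by auto
    then show ?thesis
      using lin_d1_Up_eq_empty_iff[OF that, of r0] by simp
  qed
  then have "is_ref_map S Cr Up d1 g r0"
    using r0 S_eq unfolding is_ref_map_def by (auto simp: r0_def)
  then show ?thesis
    by blast
qed

lemma is_ref_map_The: "is_ref_map S Cr Up d1 g (THE r. is_ref_map S Cr Up d1 g r)"
proof -
  have "\<exists>!r. is_ref_map S Cr Up d1 g r"
    using ex_ref_map ref_map_unique by blast
  then show ?thesis
    by (rule theI')
qed

definition up_span :: "nat \<Rightarrow> 'b set \<Rightarrow> bool" where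
  "up_span n x \<longleftrightarrow> (\<exists>A B. A \<subseteq> Up \<and> (\<forall>a\<in>A. g a = n) \<and> B \<subseteq> Up \<and> (\<forall>b\<in>B. g b = Suc n) \<and>
     x = sym_diff A (lin d1 B))"

lemma up_span_empty: "up_span n {}"
  unfolding up_span_def by (intro exI[of _ "{}"]) simp

lemma up_span_sym_diff:
  assumes "up_span n x" "up_span n y"
  shows "up_span n (sym_diff x y)"
proof -
  obtain A B where AB: "A \<subseteq> Up" "\<forall>a\<in>A. g a = n" "B \<subseteq> Up" "\<forall>b\<in>B. g b = Suc n"
    and x: "x = sym_diff A (lin d1 B)"
    using assms(1) unfolding up_span_def by blast
  obtain A' B' where AB': "A' \<subseteq> Up" "\<forall>a\<in>A'. g a = n" "B' \<subseteq> Up" "\<forall>b\<in>B'. g b = Suc n"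
    and y: "y = sym_diff A' (lin d1 B')"
    using assms(2) unfolding up_span_def by blast
  have "lin d1 (sym_diff B B') = sym_diff (lin d1 B) (lin d1 B')"
    using AB(3) AB'(3) Up_subset by (intro lin_d1_sym_diff) auto
  then have "sym_diff x y = sym_diff (sym_diff A A') (lin d1 (sym_diff B B'))"
    unfolding x y by auto
  moreover have "sym_diff A A' \<subseteq> Up" "\<forall>a\<in>sym_diff A A'. g a = n"
    "sym_diff B B' \<subseteq> Up" "\<forall>b\<in>sym_diff B B'. g b = Suc n"
    using AB AB' by auto
  ultimately show ?thesis
    unfolding up_span_def by blast
qed

lemma up_span_Up: "s \<in> Up \<Longrightarrow> up_span (g s) {s}"
  unfolding up_span_def by (intro exI[of _ "{s}"] exI[of _ "{}"]) simp

lemma up_span_d1_Up: "\<tau> \<in> Up \<Longrightarrow> g \<tau> = Suc n \<Longrightarrow> up_span n (d1 \<tau>)"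
  unfolding up_span_def by (intro exI[of _ "{}"] exI[of _ "{\<tau>}"]) simp

lemma up_span_lin:
  assumes "finite F" "\<And>s. s \<in> F \<Longrightarrow> up_span n (h s)"
  shows "up_span n (lin h F)"
  using lin_in_subspace[of F "Collect (up_span n)" h] assms up_span_empty up_span_sym_diff by simp

text \<open>Acyclicity: the \<open>idx\<close>-largest element of \<open>A\<close> is the only one whose boundary contains its mate.\<close>

lemma lin_d1_Up_eq_empty:
  assumes "A \<subseteq> Up" "lin d1 A = {}"
  shows "A = {}"
proof (rule ccontr)
  assume "A \<noteq> {}"
  moreover have "finite A"
    using assms(1) Up_subset finite_subset_S by blast
  ultimately have "Max (idx ` A) \<in> idx ` A"
    by (intro Max_in) auto
  then obtain t where t_Max: "Max (idx ` A) = idx t" and t: "t \<in> A"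
    by (rule imageE)
  have t_max: "\<forall>t'\<in>A. idx t' \<le> idx t"
    using \<open>finite A\<close> t_Max by (metis Max_ge finite_imageI imageI)
  have "t \<in> Up"
    using t assms(1) by blast
  have "{t'\<in>A. mate t \<in> d1 t'} = {t}"
  proof (intro equalityI subsetI)
    fix t'
    assume "t' \<in> {t'\<in>A. mate t \<in> d1 t'}"
    then have "t' \<in> A" "t' = t \<or> idx t < idx t'"
      using idx_mate_d1[OF \<open>t \<in> Up\<close>] assms(1) by auto
    then show "t' \<in> {t}"
      using t_max by force
  qed (use t mate_Up[OF \<open>t \<in> Up\<close>] in auto)
  then have "mate t \<in> lin d1 A"
    unfolding lin_def by simp
  then show False
    using assms(2) by simp
qed

lemma up_span_cycle:
  assumes "up_span n x" "lin d1 x = {}"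
  obtains B where "B \<subseteq> Up" "\<forall>b\<in>B. g b = Suc n" "x = lin d1 B"
proof -
  obtain A B where AB: "A \<subseteq> Up" "\<forall>a\<in>A. g a = n" "B \<subseteq> Up" "\<forall>b\<in>B. g b = Suc n"
    and x: "x = sym_diff A (lin d1 B)"
    using assms(1) unfolding up_span_def by blast
  have "lin d1 x = sym_diff (lin d1 A) (lin d1 (lin d1 B))"
    unfolding x using AB(1,3) Up_subset lin_d1_subset by (intro lin_d1_sym_diff) auto
  then have "lin d1 A = {}"
    using assms(2) lin_d1_lin_d1 AB(3) Up_subset by auto
  then have "A = {}"
    using lin_d1_Up_eq_empty AB(1) by blast
  then show ?thesis
    using that AB x by simp
qed

end

locale acyclic_matching_ref = acyclic_matching +
  fixes r
  assumes ref: "is_ref_map S Cr Up d1 g r"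
begin

lemma ref_outside: "s \<notin> S \<Longrightarrow> r s = {}"
  and ref_subset: "s \<in> S \<Longrightarrow> r s \<subseteq> {c\<in>Cr. g c = g s}"
  and ref_Cr: "s \<in> Cr \<Longrightarrow> r s = {s}"
  and ref_Up: "s \<in> Up \<Longrightarrow> r s = {}"
  and lin_ref_d1_Up: "s \<in> Up \<Longrightarrow> lin r (d1 s) = {}"
  using ref unfolding is_ref_map_def by blast+

lemma lin_ref_subset: "x \<subseteq> S \<Longrightarrow> \<forall>s\<in>x. g s = n \<Longrightarrow> lin r x \<subseteq> {c\<in>Cr. g c = n}"
  using lin_subset_UN[of r x] ref_subset by fastforce

lemma lin_ref_subset_Cr: "lin r x \<subseteq> Cr"
  using lin_subset_UN[of r x] ref_subset ref_outside by fastforce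

lemma lin_ref_Up: "A \<subseteq> Up \<Longrightarrow> lin r A = {}"
  by (rule lin_eq_emptyI) (use ref_Up in blast)

lemma lin_ref_Cr: "c \<subseteq> Cr \<Longrightarrow> lin r c = c"
proof -
  assume c: "c \<subseteq> Cr"
  then have "lin r c = lin (\<lambda>s. {s}) c"
    by (intro lin_cong) (use ref_Cr in blast)
  also have "\<dots> = c"
    using c Cr_subset finite_subset_S by (intro lin_singleton_fun) blast
  finally show ?thesis .
qed

lemma lin_ref_lin_d1_Up: "A \<subseteq> Up \<Longrightarrow> lin r (lin d1 A) = {}"
proof -
  assume A: "A \<subseteq> Up"
  have "lin r (lin d1 A) = lin (\<lambda>b. lin r (d1 b)) A"
    by (rule lin_lin) (use A Up_subset finite_subset_S finite_d1 in auto)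
  also have "\<dots> = {}"
    by (rule lin_eq_emptyI) (use A lin_ref_d1_Up in blast)
  finally show ?thesis .
qed

lemma lin_ref_lin_d1_sym_diff:
  assumes "x \<subseteq> S" "y \<subseteq> S"
  shows "lin r (lin d1 (sym_diff x y)) = sym_diff (lin r (lin d1 x)) (lin r (lin d1 y))"
proof -
  have "finite (lin d1 x)" "finite (lin d1 y)"
    using finite_subset_S lin_d1_subset assms by simp_all
  then show ?thesis
    unfolding lin_d1_sym_diff[OF assms] by (rule lin_sym_diff)
qed

text \<open>For lower \<open>s\<close>, \<open>s + r s\<close> is the boundary of \<open>mate s\<close> plus the sum of \<open>\<rho> + r \<rho>\<close> over
  the other faces \<open>\<rho>\<close> of \<open>mate s\<close>, which come earlier in \<open>idx\<close>.\<close>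

lemma sym_diff_ref_in_up_span: "s \<in> S \<Longrightarrow> up_span (g s) (sym_diff {s} (r s))"
proof (induction "idx s" arbitrary: s rule: less_induct)
  case less
  consider "s \<in> Cr" | "s \<in> Up" | "s \<in> Lo"
    using less.prems S_eq by blast
  then show ?case
  proof cases
    case 1
    then show ?thesis
      using ref_Cr up_span_empty by simp
  next
    case 2
    then show ?thesis
      using ref_Up up_span_Up by simp
  next
    case 3
    let ?\<tau> = "mate s" and ?F = "d1 (mate s) - {s}"
    have \<tau>: "?\<tau> \<in> Up" "?\<tau> \<in> S" "s \<in> d1 ?\<tau>"
      using mate_Lo[OF 3] Up_subset Lo_in_d1_mate[OF 3] by auto
    have "finite ?F"
      using finite_d1[OF \<tau>(2)] by simp
    have "up_span (g s) (sym_diff {\<rho>} (r \<rho>))" if "\<rho> \<in> ?F" for \<rho>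
      using less.hyps other_face_of_mate[OF 3 that] by metis
    then have "up_span (g s) (lin (\<lambda>\<rho>. sym_diff {\<rho>} (r \<rho>)) ?F)"
      using \<open>finite ?F\<close> by (intro up_span_lin)
    moreover have "lin (\<lambda>\<rho>. sym_diff {\<rho>} (r \<rho>)) ?F = sym_diff ?F (r s)"
      using lin_sym_diff_singleton[OF \<open>finite ?F\<close>] ref_map_Lo[OF ref 3] by simp
    moreover have "up_span (g s) (d1 ?\<tau>)"
      using up_span_d1_Up[OF \<tau>(1)] g_d1[OF \<tau>(2,3)] by simp
    ultimately have "up_span (g s) (sym_diff (d1 ?\<tau>) (sym_diff ?F (r s)))"
      using up_span_sym_diff by simp
    moreover have "sym_diff (d1 ?\<tau>) (sym_diff ?F (r s)) = sym_diff {s} (r s)"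
      using \<tau>(3) by auto
    ultimately show ?thesis
      by simp
  qed
qed

lemma sym_diff_lin_ref_in_up_span:
  assumes "x \<subseteq> S" "\<forall>s\<in>x. g s = n"
  shows "up_span n (sym_diff x (lin r x))"
proof -
  have "finite x"
    using assms(1) finite_subset_S by blast
  have "up_span n (sym_diff {s} (r s))" if "s \<in> x" for s
    using assms sym_diff_ref_in_up_span[of s] that by auto
  then have "up_span n (lin (\<lambda>s. sym_diff {s} (r s)) x)"
    using \<open>finite x\<close> by (intro up_span_lin)
  moreover have "lin (\<lambda>s. sym_diff {s} (r s)) x = sym_diff x (lin r x)"
    by (rule lin_sym_diff_singleton[OF \<open>finite x\<close>])
  ultimately show ?thesis
    by simp
qed

lemma lin_ref_lin_d1_lin_ref:
  assumes "x \<subseteq> S" "\<forall>s\<in>x. g s = n"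
  shows "lin r (lin d1 (lin r x)) = lin r (lin d1 x)"
proof -
  obtain A B where AB: "A \<subseteq> Up" "B \<subseteq> Up" and x: "sym_diff x (lin r x) = sym_diff A (lin d1 B)"
    using sym_diff_lin_ref_in_up_span[OF assms] unfolding up_span_def by blast
  have S: "lin r x \<subseteq> S" "A \<subseteq> S" "B \<subseteq> S"
    using lin_ref_subset_Cr[of x] Cr_subset AB Up_subset by auto
  then have "lin d1 B \<subseteq> S"
    by (intro lin_d1_subset)
  have "sym_diff (lin d1 x) (lin d1 (lin r x)) = sym_diff (lin d1 A) (lin d1 (lin d1 B))"
    using x lin_d1_sym_diff[OF assms(1) S(1)] lin_d1_sym_diff[OF S(2) \<open>lin d1 B \<subseteq> S\<close>] by simp
  then have "sym_diff (lin d1 x) (lin d1 (lin r x)) = lin d1 A"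
    using lin_d1_lin_d1[OF S(3)] by simp
  then have "sym_diff (lin r (lin d1 x)) (lin r (lin d1 (lin r x))) = {}"
    using lin_ref_lin_d1_sym_diff[OF assms(1) S(1)] lin_d1_sym_diff[OF assms(1) S(1)]
      lin_ref_lin_d1_Up[OF AB(1)] by simp
  then show ?thesis
    by blast
qed

lemma ref_null_cycle:
  assumes "x \<subseteq> S" "\<forall>s\<in>x. g s = n" "lin d1 x = {}" "lin r x = {}"
  obtains B where "B \<subseteq> Up" "\<forall>b\<in>B. g b = Suc n" "x = lin d1 B"
  using up_span_cycle sym_diff_lin_ref_in_up_span[OF assms(1,2)] assms(3,4) by auto

lemma ref_null_boundary:
  assumes x: "x \<subseteq> S" "\<forall>s\<in>x. g s = n" "lin r (lin d1 x) = {}"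
  obtains B where "B \<subseteq> Up" "\<forall>b\<in>B. g b = n" "lin d1 x = lin d1 B"
proof (cases n)
  case 0
  then show ?thesis
    using that[of "{}"] lin_d1_g_0[OF x(1)] x(2) by simp
next
  case (Suc m)
  have "\<forall>s\<in>x. g s = Suc m"
    using x(2) Suc by simp
  note d1_x = lin_d1_subset[OF x(1)] g_lin_d1[OF x(1) this]
  have "lin d1 x \<subseteq> S" "\<forall>s\<in>lin d1 x. g s = m"
    using d1_x by auto
  then obtain B where "B \<subseteq> Up" "\<forall>b\<in>B. g b = Suc m" "lin d1 x = lin d1 B"
    by (rule ref_null_cycle[OF _ _ lin_d1_lin_d1[OF x(1)] x(3)])
  then show ?thesis
    using that Suc by simp
qed

definition cycles :: "nat \<Rightarrow> _ set set" where
  "cycles n = {c \<in> Pow {s\<in>S. g s = n}. lin d1 c = {}}"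

definition boundaries :: "nat \<Rightarrow> _ set set" where
  "boundaries n = lin d1 ` Pow {s\<in>S. g s = Suc n}"

definition crit_cycles :: "nat \<Rightarrow> _ set set" where
  "crit_cycles n = {c \<in> Pow {s\<in>Cr. g s = n}. lin r (lin d1 c) = {}}"

definition crit_boundaries :: "nat \<Rightarrow> _ set set" where
  "crit_boundaries n = (\<lambda>c. lin r (lin d1 c)) ` Pow {s\<in>Cr. g s = Suc n}"

lemma z2_subspace_cycles: "z2_subspace (cycles n)"
  unfolding cycles_def using lin_d1_sym_diff by (intro z2_subspace_kernel z2_subspace_Pow) auto

lemma z2_subspace_boundaries: "z2_subspace (boundaries n)"
  unfolding boundaries_def using lin_d1_sym_diff by (intro z2_subspace_image z2_subspace_Pow) auto

lemma z2_subspace_crit_boundaries: "z2_subspace (crit_boundaries n)"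
  unfolding crit_boundaries_def
proof (rule z2_subspace_image[OF z2_subspace_Pow])
  fix x y
  assume "x \<in> Pow {s\<in>Cr. g s = Suc n}" "y \<in> Pow {s\<in>Cr. g s = Suc n}"
  then show "lin r (lin d1 (sym_diff x y)) = sym_diff (lin r (lin d1 x)) (lin r (lin d1 y))"
    using Cr_subset by (intro lin_ref_lin_d1_sym_diff) auto
qed

lemma lin_ref_cycles:
  assumes "z \<in> cycles n"
  shows "lin r z \<in> crit_cycles n"
proof -
  have z: "z \<subseteq> S" "\<forall>s\<in>z. g s = n" "lin d1 z = {}"
    using assms unfolding cycles_def by auto
  then show ?thesis
    unfolding crit_cycles_def using lin_ref_subset[OF z(1,2)] lin_ref_lin_d1_lin_ref[OF z(1,2)] by simp
qed

lemma lin_ref_boundaries: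
  assumes "b \<in> boundaries n"
  shows "lin r b \<in> crit_boundaries n"
proof -
  obtain w where w: "w \<subseteq> S" "\<forall>s\<in>w. g s = Suc n" "b = lin d1 w"
    using assms unfolding boundaries_def by auto
  then have "lin r b = lin r (lin d1 (lin r w))" "lin r w \<in> Pow {s\<in>Cr. g s = Suc n}"
    using lin_ref_lin_d1_lin_ref[OF w(1,2)] lin_ref_subset[OF w(1,2)] by auto
  then show ?thesis
    unfolding crit_boundaries_def by blast
qed

lemma lin_ref_onto_crit_cycles:
  assumes "zh \<in> crit_cycles n"
  shows "\<exists>z\<in>cycles n. lin r z = zh"
proof -
  have zh: "zh \<subseteq> Cr" "\<forall>s\<in>zh. g s = n" "lin r (lin d1 zh) = {}"
    using assms unfolding crit_cycles_def by auto
  then have zh_S: "zh \<subseteq> S"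
    using Cr_subset by blast
  obtain B where B: "B \<subseteq> Up" "\<forall>b\<in>B. g b = n" "lin d1 zh = lin d1 B"
    using ref_null_boundary[OF zh_S zh(2,3)] .
  have B_S: "B \<subseteq> S"
    using B(1) Up_subset by blast
  have "finite zh" "finite B"
    using finite_subset_S[OF zh_S] finite_subset_S[OF B_S] .
  then have "lin r (sym_diff zh B) = zh"
    using lin_sym_diff[of zh B r] lin_ref_Cr[OF zh(1)] lin_ref_Up[OF B(1)] by simp
  moreover have "lin d1 (sym_diff zh B) = {}"
    using lin_d1_sym_diff[OF zh_S B_S] B(3) by simp
  moreover have "sym_diff zh B \<subseteq> S" "\<forall>s\<in>sym_diff zh B. g s = n"
    using zh_S B_S zh(2) B(2) by auto
  ultimately show ?thesis
    unfolding cycles_def by blast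
qed

lemma lin_ref_reflects_boundaries:
  assumes "z \<in> cycles n" "lin r z \<in> crit_boundaries n"
  shows "z \<in> boundaries n"
proof -
  have z: "z \<subseteq> S" "\<forall>s\<in>z. g s = n" "lin d1 z = {}"
    using assms(1) unfolding cycles_def by auto
  obtain w where w: "w \<subseteq> Cr" "\<forall>s\<in>w. g s = Suc n" and ref_z: "lin r z = lin r (lin d1 w)"
    using assms(2) unfolding crit_boundaries_def by auto
  have w_S: "w \<subseteq> S"
    using w(1) Cr_subset by blast
  then have d1_w: "lin d1 w \<subseteq> S" "\<forall>s\<in>lin d1 w. g s = n"
    using lin_d1_subset[OF w_S] g_lin_d1[OF w_S w(2)] by auto
  let ?x = "sym_diff z (lin d1 w)"
  have "finite z" "finite (lin d1 w)"
    using z(1) d1_w(1) finite_subset_S by simp_all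
  then have x_ref: "lin r ?x = {}"
    using lin_sym_diff[of z "lin d1 w" r] ref_z by simp
  have x: "?x \<subseteq> S" "\<forall>s\<in>?x. g s = n"
    using z d1_w by auto
  have x_d1: "lin d1 ?x = {}"
    using lin_d1_sym_diff[OF z(1) d1_w(1)] z(3) lin_d1_lin_d1[OF w_S] by simp
  obtain B where B: "B \<subseteq> Up" "\<forall>b\<in>B. g b = Suc n" "?x = lin d1 B"
    by (rule ref_null_cycle[OF x x_d1 x_ref])
  have B_S: "B \<subseteq> S"
    using B(1) Up_subset by blast
  have "z = sym_diff ?x (lin d1 w)"
    by auto
  also have "\<dots> = lin d1 (sym_diff B w)"
    using B(3) lin_d1_sym_diff[OF B_S w_S] by simp
  finally show ?thesis
    unfolding boundaries_def by (rule image_eqI) (use B_S w_S B(2) w(2) in auto)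
qed

theorem vs_iso_critical:
  "vs_iso (quot_space (cycles n) (boundaries n)) (quot_space (crit_cycles n) (crit_boundaries n))"
proof (rule vs_iso_quot_spaceI[OF z2_subspace_boundaries z2_subspace_crit_boundaries
      z2_subspace_cycles lin_ref_cycles _ lin_ref_boundaries lin_ref_onto_crit_cycles
      lin_ref_reflects_boundaries])
  fix x y
  assume "x \<in> cycles n" "y \<in> cycles n"
  then have "finite x" "finite y"
    unfolding cycles_def using finite_subset_S by auto
  then show "lin r (sym_diff x y) = sym_diff (lin r x) (lin r y)"
    by (rule lin_sym_diff)
qed

end

section \<open>Simplicial complexes\<close>

lemma card_between_codim2:
  assumes "finite v" "u \<subseteq> v" "card v = card u + 2"
  shows "card {t. u \<subseteq> t \<and> t \<subseteq> v \<and> card t = card u + 1} = 2"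
proof -
  have "finite u"
    using assms finite_subset by blast
  then have "card (v - u) = 2"
    using assms by (simp add: card_Diff_subset)
  then obtain a b where ab: "v - u = {a, b}" "a \<noteq> b"
    by (meson card_2_iff)
  have "{t. u \<subseteq> t \<and> t \<subseteq> v \<and> card t = card u + 1} = {insert a u, insert b u}"
  proof (intro equalityI subsetI)
    fix t
    assume "t \<in> {t. u \<subseteq> t \<and> t \<subseteq> v \<and> card t = card u + 1}"
    then have t: "u \<subseteq> t" "t \<subseteq> v" "card t = card u + 1"
      by auto
    then have "card (t - u) = 1"
      using \<open>finite u\<close> assms(1) finite_subset by (simp add: card_Diff_subset)
    then obtain c where c: "t - u = {c}"
      using card_1_singleton_iff[of "t - u"] by auto
    then have "c \<in> {a, b}" "t = insert c u"
      using t ab by blast+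
    then show "t \<in> {insert a u, insert b u}"
      by blast
  next
    fix t
    assume "t \<in> {insert a u, insert b u}"
    moreover have "a \<notin> u" "b \<notin> u" "a \<in> v" "b \<in> v"
      using ab by auto
    ultimately show "t \<in> {t. u \<subseteq> t \<and> t \<subseteq> v \<and> card t = card u + 1}"
      using \<open>finite u\<close> assms(2) by auto
  qed
  moreover have "insert a u \<noteq> insert b u"
    using ab by blast
  ultimately show ?thesis
    by simp
qed

lemma simplicial_complex_finite: "simplicial_complex K \<Longrightarrow> finite K"
  and simplicial_complex_finite_simplex: "simplicial_complex K \<Longrightarrow> s \<in> K \<Longrightarrow> finite s"
  and simplicial_complex_nonempty: "simplicial_complex K \<Longrightarrow> s \<in> K \<Longrightarrow> s \<noteq> {}"
  and simplicial_complex_face: "simplicial_complex K \<Longrightarrow> s \<in> K \<Longrightarrow> t \<subseteq> s \<Longrightarrow> t \<noteq> {} \<Longrightarrow> t \<in> K"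
  unfolding simplicial_complex_def by blast+

text \<open>Both \<open>\<partial>\<partial> = 0\<close> and \<open>\<delta>\<delta> = 0\<close> come down to this: a simplex has exactly two faces strictly
  between itself and a face of codimension two.\<close>

lemma card_faces_between:
  assumes K: "simplicial_complex K" and "s \<in> K" "x \<in> K" "x \<subseteq> s" "card s = card x + 2"
  shows "card {t\<in>K. x \<subseteq> t \<and> t \<subseteq> s \<and> card t = card x + 1} = 2"
proof -
  have "{t\<in>K. x \<subseteq> t \<and> t \<subseteq> s \<and> card t = card x + 1} = {t. x \<subseteq> t \<and> t \<subseteq> s \<and> card t = card x + 1}"
    using simplicial_complex_face[OF K \<open>s \<in> K\<close>] simplicial_complex_nonempty[OF K \<open>x \<in> K\<close>] by blast
  then show ?thesis
    using card_between_codim2 simplicial_complex_finite_simplex[OF K \<open>s \<in> K\<close>] assms(4,5) by simp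
qed

lemma lin_bd1_bd1:
  assumes K: "simplicial_complex K" and "s \<in> K"
  shows "lin (bd1 K) (bd1 K s) = {}"
proof -
  have "even (card {t \<in> bd1 K s. x \<in> bd1 K t})" for x
  proof (cases "x \<in> K \<and> x \<subseteq> s \<and> card s = card x + 2")
    case True
    have "finite s"
      using simplicial_complex_finite_simplex[OF K \<open>s \<in> K\<close>] .
    then have "{t \<in> bd1 K s. x \<in> bd1 K t} = {t\<in>K. x \<subseteq> t \<and> t \<subseteq> s \<and> card t = card x + 1}"
      using True unfolding bd1_def by (auto dest: psubset_card_mono)
    then show ?thesis
      using card_faces_between[OF K \<open>s \<in> K\<close>] True by simp
  next
    case False
    then have "{t \<in> bd1 K s. x \<in> bd1 K t} = {}"
      unfolding bd1_def by auto
    then show ?thesis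
      by (metis card.empty even_zero)
  qed
  then show ?thesis
    unfolding lin_def by simp
qed

lemma lin_cobd1_cobd1:
  assumes K: "simplicial_complex K" and "s \<in> K"
  shows "lin (cobd1 K) (cobd1 K s) = {}"
proof -
  have "even (card {t \<in> cobd1 K s. x \<in> cobd1 K t})" for x
  proof (cases "x \<in> K \<and> s \<subseteq> x \<and> card x = card s + 2")
    case True
    then have "finite x"
      using simplicial_complex_finite_simplex[OF K] by blast
    then have "{t \<in> cobd1 K s. x \<in> cobd1 K t} = {t\<in>K. s \<subseteq> t \<and> t \<subseteq> x \<and> card t = card s + 1}"
      using True unfolding cobd1_def by (auto dest: psubset_card_mono)
    then show ?thesis
      using card_faces_between[OF K _ \<open>s \<in> K\<close>] True by simp
  next
    case False
    then have "{t \<in> cobd1 K s. x \<in> cobd1 K t} = {}"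
      unfolding cobd1_def by auto
    then show ?thesis
      by (metis card.empty even_zero)
  qed
  then show ?thesis
    unfolding lin_def by simp
qed

section \<open>Morse sequences\<close>

locale morse_sequence =
  fixes K :: "'a set set" and W :: "'a set set list"
  assumes complex: "simplicial_complex K" and morse: "morse_seq K W"
begin

abbreviation added :: "nat \<Rightarrow> 'a set set" where
  "added i \<equiv> W ! Suc i - W ! i"

definition idx :: "'a set \<Rightarrow> nat" where
  "idx s = (LEAST i. s \<in> W ! Suc i)"

text \<open>On a critical simplex this is the junk value \<open>the_elem {}\<close>.\<close>

definition mate :: "'a set \<Rightarrow> 'a set" where
  "mate s = the_elem (added (idx s) - {s})"

lemma W_0: "W ! 0 = {}"
  and W_last: "W ! (length W - 1) = K"
  using morse unfolding morse_seq_def by (auto simp: last_conv_nth)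

lemma morse_step: "Suc i < length W \<Longrightarrow> elem_expansion (W ! i) (W ! Suc i) \<or> elem_filling (W ! i) (W ! Suc i)"
  using morse unfolding morse_seq_def by blast

lemma W_Suc_subset: "Suc i < length W \<Longrightarrow> W ! i \<subseteq> W ! Suc i"
  using morse_step unfolding elem_expansion_def elem_filling_def by auto

lemma morse_step_cases:
  assumes "Suc i < length W"
  obtains (filling) \<nu> where "added i = {\<nu>}" "facet (W ! Suc i) \<nu>"
    | (expansion) \<sigma> \<tau> where "added i = {\<sigma>, \<tau>}" "free_pair (W ! Suc i) \<sigma> \<tau>"
proof -
  from morse_step[OF assms] show ?thesis
  proof
    assume "elem_expansion (W ! i) (W ! Suc i)"
    then obtain \<sigma> \<tau> where fp: "free_pair (W ! Suc i) \<sigma> \<tau>" and W_i: "W ! i = W ! Suc i - {\<sigma>, \<tau>}"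
      unfolding elem_expansion_def by blast
    have "\<sigma> \<in> W ! Suc i" "\<tau> \<in> W ! Suc i"
      using fp unfolding free_pair_def by simp_all
    then have "added i = {\<sigma>, \<tau>}"
      unfolding W_i by blast
    then show ?thesis
      using fp by (rule that(2))
  next
    assume "elem_filling (W ! i) (W ! Suc i)"
    then obtain \<nu> where f: "facet (W ! Suc i) \<nu>" and W_i: "W ! i = W ! Suc i - {\<nu>}"
      unfolding elem_filling_def by blast
    have "\<nu> \<in> W ! Suc i"
      using f unfolding facet_def by simp
    then have "added i = {\<nu>}"
      unfolding W_i by blast
    then show ?thesis
      using f by (rule that(1))
  qed
qed

lemma W_mono: "i \<le> j \<Longrightarrow> j < length W \<Longrightarrow> W ! i \<subseteq> W ! j"
proof (induction j rule: dec_induct)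
  case (step j)
  then show ?case
    using W_Suc_subset[of j] by simp
qed simp

lemma W_subset_K: "j < length W \<Longrightarrow> W ! j \<subseteq> K"
  using W_mono[of j "length W - 1"] W_last by simp

lemma added_subset_K: "Suc i < length W \<Longrightarrow> added i \<subseteq> K"
  using W_subset_K by blast

lemma added_upward_closed:
  assumes "Suc i < length W" "\<rho> \<in> added i" "\<rho> \<subseteq> s" "s \<in> W ! Suc i"
  shows "s \<in> added i"
  using assms(1)
proof (cases rule: morse_step_cases)
  case (filling \<nu>)
  then show ?thesis
    using assms(2-4) unfolding facet_def by auto
next
  case (expansion \<sigma> \<tau>)
  then have "\<sigma> \<subseteq> \<rho>"
    using assms(2) unfolding free_pair_def by auto
  then show ?thesis
    using expansion assms(3,4) unfolding free_pair_def by blast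
qed

lemma W_face_closed:
  assumes "j < length W" "s \<in> W ! j" "t \<subseteq> s" "t \<noteq> {}"
  shows "t \<in> W ! j"
proof -
  have "j \<le> length W - 1"
    using assms(1) by simp
  then show ?thesis
    using assms(2)
  proof (induction j rule: inc_induct)
    case base
    then have "s \<in> K"
      using W_last by simp
    then show ?case
      using W_last simplicial_complex_face[OF complex _ assms(3,4)] by simp
  next
    case (step n)
    have "Suc n < length W"
      using step.hyps by simp
    then have "s \<in> W ! Suc n"
      using W_Suc_subset step.prems by blast
    then have "t \<in> W ! Suc n"
      using step.IH by blast
    moreover have "t \<notin> added n"
      using added_upward_closed[OF \<open>Suc n < length W\<close> _ assms(3) \<open>s \<in> W ! Suc n\<close>] step.prems by blast
    ultimately show ?case
      by blast
  qed
qed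

lemma free_pair_card:
  assumes "j < length W" "free_pair (W ! j) \<sigma> \<tau>"
  shows "card \<tau> = Suc (card \<sigma>)"
proof -
  have \<tau>: "\<tau> \<in> W ! j" "\<sigma> \<subset> \<tau>" and free: "\<forall>\<rho>\<in>W ! j. \<sigma> \<subseteq> \<rho> \<longrightarrow> \<rho> = \<sigma> \<or> \<rho> = \<tau>"
    using assms(2) unfolding free_pair_def by auto
  have "finite \<tau>"
    using \<tau>(1) W_subset_K[OF assms(1)] simplicial_complex_finite_simplex[OF complex] by blast
  obtain x where x: "x \<in> \<tau>" "x \<notin> \<sigma>"
    using \<tau>(2) by blast
  have "insert x \<sigma> \<in> W ! j"
    by (rule W_face_closed[OF assms(1) \<tau>(1)]) (use x \<tau>(2) in auto)
  then have "insert x \<sigma> = \<tau>"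
    using free x(2) by blast
  moreover have "finite \<sigma>"
    using \<open>finite \<tau>\<close> \<tau>(2) finite_subset by auto
  ultimately show ?thesis
    using x(2) by auto
qed

lemma added_idx:
  assumes "s \<in> K"
  shows "Suc (idx s) < length W" "s \<in> added (idx s)"
proof -
  obtain i where i: "length W - 1 = Suc i"
    using assms W_0 W_last by (metis empty_iff not0_implies_Suc)
  then have "s \<in> W ! Suc i"
    using assms W_last by simp
  then have "s \<in> W ! Suc (idx s)" "idx s \<le> i"
    unfolding idx_def by (fact LeastI, fact Least_le)
  moreover have "s \<notin> W ! idx s"
  proof (cases "idx s")
    case (Suc k)
    then show ?thesis
      using not_less_Least[of k "\<lambda>i. s \<in> W ! Suc i"] unfolding idx_def by simp
  qed (simp add: W_0)
  ultimately show "Suc (idx s) < length W" "s \<in> added (idx s)"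
    using i by auto
qed

lemma mem_W_iff:
  assumes "s \<in> K" "j < length W"
  shows "s \<in> W ! j \<longleftrightarrow> idx s < j"
proof
  assume "idx s < j"
  then show "s \<in> W ! j"
    using W_mono[of "Suc (idx s)" j] added_idx[OF assms(1)] assms(2) by auto
next
  assume "s \<in> W ! j"
  then show "idx s < j"
    using W_mono[of j "idx s"] added_idx[OF assms(1)] by (meson DiffD2 Suc_lessD not_le_imp_less subsetD)
qed

lemma idx_added:
  assumes "Suc i < length W" "s \<in> added i"
  shows "idx s = i"
proof -
  have "s \<in> K"
    using assms added_subset_K by blast
  then show ?thesis
    using mem_W_iff[OF \<open>s \<in> K\<close>] assms by (metis DiffD1 DiffD2 Suc_lessD less_SucE)
qed

lemma mate_eq:
  assumes "Suc i < length W" "added i = {a, b}" "a \<noteq> b"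
  shows "mate a = b"
proof -
  have "idx a = i"
    using idx_added[OF assms(1)] assms(2) by blast
  then have "added (idx a) - {a} = {b}"
    using assms(2,3) by auto
  then show ?thesis
    unfolding mate_def by simp
qed

lemma regular_pair:
  assumes "Suc i < length W" "added i = {\<sigma>, \<tau>}" "\<sigma> \<subset> \<tau>"
  shows "free_pair (W ! Suc i) \<sigma> \<tau>" "idx \<sigma> = i" "idx \<tau> = i" "mate \<sigma> = \<tau>" "mate \<tau> = \<sigma>"
    "\<sigma> \<in> lower_regular W" "\<tau> \<in> upper_regular W"
proof -
  show "free_pair (W ! Suc i) \<sigma> \<tau>"
    using assms(1)
  proof (cases rule: morse_step_cases)
    case (filling \<nu>)
    then have "\<sigma> = \<nu>" "\<tau> = \<nu>"
      using assms(2) by blast+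
    then show ?thesis
      using assms(3) by simp
  next
    case (expansion \<sigma>' \<tau>')
    then have "\<sigma>' \<subset> \<tau>'"
      unfolding free_pair_def by blast
    then have "\<sigma>' = \<sigma> \<and> \<tau>' = \<tau>"
      using expansion(1) assms(2,3) by (metis doubleton_eq_iff less_asym)
    then show ?thesis
      using expansion(2) by simp
  qed
  show "idx \<sigma> = i" "idx \<tau> = i"
    using idx_added[OF assms(1)] assms(2) by auto
  show "mate \<sigma> = \<tau>" "mate \<tau> = \<sigma>"
    using mate_eq[OF assms(1)] assms(2,3) by (auto simp: insert_commute)
  show "\<sigma> \<in> lower_regular W" "\<tau> \<in> upper_regular W"
    unfolding lower_regular_def upper_regular_def using assms by blast+
qed

lemma upper_regular_mate:
  assumes "\<tau> \<in> upper_regular W"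
  shows "Suc (idx \<tau>) < length W" "added (idx \<tau>) = {mate \<tau>, \<tau>}" "free_pair (W ! Suc (idx \<tau>)) (mate \<tau>) \<tau>"
    "mate \<tau> \<in> lower_regular W" "mate (mate \<tau>) = \<tau>" "idx (mate \<tau>) = idx \<tau>"
proof -
  obtain i \<sigma> where "Suc i < length W" "\<sigma> \<subset> \<tau>" "added i = {\<sigma>, \<tau>}"
    using assms unfolding upper_regular_def by blast
  with regular_pair[OF this(1,3,2)] show "Suc (idx \<tau>) < length W" "added (idx \<tau>) = {mate \<tau>, \<tau>}"
    "free_pair (W ! Suc (idx \<tau>)) (mate \<tau>) \<tau>" "mate \<tau> \<in> lower_regular W" "mate (mate \<tau>) = \<tau>"
    "idx (mate \<tau>) = idx \<tau>"
    by simp_all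
qed

lemma lower_regular_mate:
  assumes "\<sigma> \<in> lower_regular W"
  shows "Suc (idx \<sigma>) < length W" "added (idx \<sigma>) = {\<sigma>, mate \<sigma>}" "free_pair (W ! Suc (idx \<sigma>)) \<sigma> (mate \<sigma>)"
    "mate \<sigma> \<in> upper_regular W" "mate (mate \<sigma>) = \<sigma>" "idx (mate \<sigma>) = idx \<sigma>"
proof -
  obtain i \<tau> where "Suc i < length W" "\<sigma> \<subset> \<tau>" "added i = {\<sigma>, \<tau>}"
    using assms unfolding lower_regular_def by blast
  with regular_pair[OF this(1,3,2)] show "Suc (idx \<sigma>) < length W" "added (idx \<sigma>) = {\<sigma>, mate \<sigma>}"
    "free_pair (W ! Suc (idx \<sigma>)) \<sigma> (mate \<sigma>)" "mate \<sigma> \<in> upper_regular W" "mate (mate \<sigma>) = \<sigma>"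
    "idx (mate \<sigma>) = idx \<sigma>"
    by simp_all
qed

lemma critical_added:
  assumes "\<nu> \<in> critical W"
  shows "Suc (idx \<nu>) < length W" "added (idx \<nu>) = {\<nu>}"
proof -
  obtain i where "Suc i < length W" "added i = {\<nu>}"
    using assms unfolding critical_def by blast
  moreover from this have "idx \<nu> = i"
    using idx_added by blast
  ultimately show "Suc (idx \<nu>) < length W" "added (idx \<nu>) = {\<nu>}"
    by simp_all
qed

lemma K_eq_critical_regular: "K = critical W \<union> lower_regular W \<union> upper_regular W"
proof (intro equalityI subsetI)
  fix s
  assume "s \<in> K"
  note s = added_idx[OF this]
  from s(1) show "s \<in> critical W \<union> lower_regular W \<union> upper_regular W"
  proof (cases rule: morse_step_cases)
    case (filling \<nu>)
    then have "added (idx s) = {s}"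
      using s(2) by simp
    then have "s \<in> critical W"
      unfolding critical_def using s(1) by blast
    then show ?thesis
      by simp
  next
    case (expansion \<sigma> \<tau>)
    then have "\<sigma> \<subset> \<tau>"
      unfolding free_pair_def by blast
    note regular_pair(6,7)[OF s(1) expansion(1) this]
    moreover have "s = \<sigma> \<or> s = \<tau>"
      using s(2) expansion(1) by simp
    ultimately show ?thesis
      by blast
  qed
next
  fix s
  assume "s \<in> critical W \<union> lower_regular W \<union> upper_regular W"
  then obtain i where "Suc i < length W" "s \<in> added i"
    unfolding critical_def lower_regular_def upper_regular_def by (elim UnE CollectE exE conjE) auto
  then show "s \<in> K"
    using added_subset_K by blast
qed

lemma lower_regular_subset_mate: "\<sigma> \<in> lower_regular W \<Longrightarrow> \<sigma> \<subset> mate \<sigma>"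
  using lower_regular_mate(3) unfolding free_pair_def by blast

lemma upper_regular_mate_subset: "\<tau> \<in> upper_regular W \<Longrightarrow> mate \<tau> \<subset> \<tau>"
  using upper_regular_mate(3) unfolding free_pair_def by blast

lemma critical_lower_regular: "critical W \<inter> lower_regular W = {}"
proof (intro equals0I)
  fix s
  assume s: "s \<in> critical W \<inter> lower_regular W"
  then have "{s} = {s, mate s}"
    using critical_added(2) lower_regular_mate(2) by (metis IntD1 IntD2)
  then show False
    using lower_regular_subset_mate s by auto
qed

lemma critical_upper_regular: "critical W \<inter> upper_regular W = {}"
proof (intro equals0I)
  fix s
  assume s: "s \<in> critical W \<inter> upper_regular W"
  then have "{s} = {mate s, s}"
    using critical_added(2) upper_regular_mate(2) by (metis IntD1 IntD2)
  then show False
    using upper_regular_mate_subset s by auto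
qed

lemma lower_upper_regular: "lower_regular W \<inter> upper_regular W = {}"
  using lower_regular_subset_mate upper_regular_mate_subset less_asym by blast

lemma critical_regular_subset_K: "critical W \<subseteq> K" "lower_regular W \<subseteq> K" "upper_regular W \<subseteq> K"
  using K_eq_critical_regular by blast+

lemma mate_in_cobd1:
  assumes "\<sigma> \<in> lower_regular W"
  shows "mate \<sigma> \<in> cobd1 K \<sigma>"
proof -
  have "card (mate \<sigma>) = Suc (card \<sigma>)"
    using free_pair_card lower_regular_mate(1,3)[OF assms] by (simp add: Suc_lessD)
  then show ?thesis
    using lower_regular_mate(4)[OF assms] critical_regular_subset_K(3) lower_regular_subset_mate[OF assms]
    unfolding cobd1_def by auto
qed

lemma mate_in_bd1:
  assumes "\<tau> \<in> upper_regular W"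
  shows "mate \<tau> \<in> bd1 K \<tau>"
  using mate_in_cobd1[of "mate \<tau>"] upper_regular_mate(4,5)[OF assms] critical_regular_subset_K(2)
  unfolding bd1_def cobd1_def by auto

lemma idx_face_upper_regular:
  assumes "\<tau> \<in> upper_regular W" "\<rho> \<in> K" "\<rho> \<subset> \<tau>" "\<rho> \<noteq> mate \<tau>"
  shows "idx \<rho> < idx \<tau>"
proof -
  note \<tau> = upper_regular_mate[OF assms(1)]
  have "\<rho> \<in> W ! Suc (idx \<tau>)"
    using W_face_closed[OF \<tau>(1), of \<tau> \<rho>] \<tau>(2) assms(3) simplicial_complex_nonempty[OF complex assms(2)]
    by blast
  moreover have "\<rho> \<notin> added (idx \<tau>)"
    using \<tau>(2) assms(3,4) by auto
  ultimately have "\<rho> \<in> W ! idx \<tau>"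
    by blast
  then show ?thesis
    using mem_W_iff[OF assms(2)] \<tau>(1) by simp
qed

lemma idx_coface_lower_regular:
  assumes "\<sigma> \<in> lower_regular W" "\<rho> \<in> K" "\<sigma> \<subset> \<rho>" "\<rho> \<noteq> mate \<sigma>"
  shows "idx \<sigma> < idx \<rho>"
proof (rule ccontr)
  note \<sigma> = lower_regular_mate[OF assms(1)]
  assume "\<not> idx \<sigma> < idx \<rho>"
  then have "\<rho> \<in> W ! Suc (idx \<sigma>)"
    using mem_W_iff[OF assms(2) \<sigma>(1)] by simp
  then show False
    using \<sigma>(3) assms(3,4) unfolding free_pair_def by blast
qed

lemma homology_matching:
  "acyclic_matching K (bd1 K) card idx (critical W) (lower_regular W) (upper_regular W) mate"
proof
  show "finite K"
    by (rule simplicial_complex_finite[OF complex])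
  show "lin (bd1 K) (bd1 K s) = {}" if "s \<in> K" for s
    by (rule lin_bd1_bd1[OF complex that])
  show "K = critical W \<union> lower_regular W \<union> upper_regular W"
    by (rule K_eq_critical_regular)
next
  fix \<tau>
  assume "\<tau> \<in> upper_regular W"
  then show "mate \<tau> \<in> lower_regular W \<and> mate \<tau> \<in> bd1 K \<tau> \<and> mate (mate \<tau>) = \<tau>"
    using upper_regular_mate(4,5) mate_in_bd1 by blast
next
  fix \<tau> \<rho>
  assume "\<tau> \<in> upper_regular W" "\<rho> \<in> bd1 K \<tau>" "\<rho> \<noteq> mate \<tau>"
  then show "idx \<rho> < idx (mate \<tau>)"
    using idx_face_upper_regular upper_regular_mate(6) unfolding bd1_def by auto
next
  fix \<tau> \<tau>'
  assume \<tau>: "\<tau> \<in> upper_regular W" and "\<tau>' \<in> upper_regular W" "mate \<tau> \<in> bd1 K \<tau>'"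
  then show "\<tau>' = \<tau> \<or> idx \<tau> < idx \<tau>'"
    using idx_coface_lower_regular[of "mate \<tau>" \<tau>'] upper_regular_mate[OF \<tau>] critical_regular_subset_K(3)
    unfolding bd1_def by auto
qed (auto simp: bd1_def critical_lower_regular critical_upper_regular lower_upper_regular
  lower_regular_mate)

text \<open>Cohomology is the homology of the reversed filtration: the coboundary lowers the
  codimension \<open>M - card s\<close>, the order of the sequence is reversed, and lower and upper regular
  simplices exchange their roles.\<close>

lemma cohomology_matching:
  assumes M: "\<forall>s\<in>K. card s \<le> M"
  shows "acyclic_matching K (cobd1 K) (\<lambda>s. M - card s) (\<lambda>s. length W - idx s)
    (critical W) (upper_regular W) (lower_regular W) mate"
proof
  show "finite K"
    by (rule simplicial_complex_finite[OF complex])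
  show "lin (cobd1 K) (cobd1 K s) = {}" if "s \<in> K" for s
    by (rule lin_cobd1_cobd1[OF complex that])
  show "K = critical W \<union> upper_regular W \<union> lower_regular W"
    using K_eq_critical_regular by blast
  show "M - card s = Suc (M - card t)" if "t \<in> cobd1 K s" for s t
    using that M unfolding cobd1_def by force
  show "upper_regular W \<inter> lower_regular W = {}"
    using lower_upper_regular by blast
next
  fix \<sigma>
  assume "\<sigma> \<in> lower_regular W"
  then show "mate \<sigma> \<in> upper_regular W \<and> mate \<sigma> \<in> cobd1 K \<sigma> \<and> mate (mate \<sigma>) = \<sigma>"
    using lower_regular_mate(4,5) mate_in_cobd1 by blast
next
  fix \<sigma> \<rho>
  assume \<sigma>: "\<sigma> \<in> lower_regular W" and \<rho>: "\<rho> \<in> cobd1 K \<sigma>" "\<rho> \<noteq> mate \<sigma>"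
  then have "idx \<sigma> < idx \<rho>" "idx \<rho> < length W"
    using idx_coface_lower_regular added_idx(1) unfolding cobd1_def by (auto simp: Suc_lessD)
  then show "length W - idx \<rho> < length W - idx (mate \<sigma>)"
    using lower_regular_mate(6)[OF \<sigma>] by simp
next
  fix \<sigma> \<sigma>'
  assume \<sigma>: "\<sigma> \<in> lower_regular W" and "\<sigma>' \<in> lower_regular W" "mate \<sigma> \<in> cobd1 K \<sigma>'"
  then have "\<sigma>' = \<sigma> \<or> idx \<sigma>' < idx \<sigma>"
    using idx_face_upper_regular[of "mate \<sigma>" \<sigma>'] lower_regular_mate[OF \<sigma>] critical_regular_subset_K(2)
    unfolding cobd1_def by auto
  then show "\<sigma>' = \<sigma> \<or> length W - idx \<sigma> < length W - idx \<sigma>'"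
    using lower_regular_mate(1)[OF \<sigma>] by auto
qed (auto simp: cobd1_def critical_lower_regular critical_upper_regular lower_upper_regular
  upper_regular_mate)

lemma critical_Int_Kcard: "critical W \<inter> Kcard K n = {c \<in> critical W. card c = n}"
  using critical_regular_subset_K(1) unfolding Kcard_def by blast

lemma is_ref_eq: "is_ref K W = is_ref_map K (critical W) (upper_regular W) (bd1 K) card"
  unfolding is_ref_def is_ref_map_def critical_Int_Kcard ..

lemma is_coref_eq:
  assumes M: "\<forall>s\<in>K. card s \<le> M"
  shows "is_coref K W = is_ref_map K (critical W) (lower_regular W) (cobd1 K) (\<lambda>s. M - card s)"
proof -
  have "M - card c = M - card s \<longleftrightarrow> card c = card s" if "c \<in> K" "s \<in> K" for c s
  proof -
    have "card c \<le> M" "card s \<le> M"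
      using M that by blast+
    then show ?thesis
      by linarith
  qed
  then have "{c \<in> critical W. M - card c = M - card s} = {c \<in> critical W. card c = card s}"
    if "s \<in> K" for s
    using that critical_regular_subset_K(1) by blast
  then show ?thesis
    unfolding is_coref_def is_ref_map_def critical_Int_Kcard by (intro ext) auto
qed

lemma homology_reference: "acyclic_matching_ref K (bd1 K) card idx (critical W) (lower_regular W)
  (upper_regular W) mate (reference K W)"
proof -
  interpret acyclic_matching K "bd1 K" card idx "critical W" "lower_regular W" "upper_regular W" mate
    by (rule homology_matching)
  show ?thesis
    by unfold_locales (unfold reference_def is_ref_eq, rule is_ref_map_The)
qed

lemma cohomology_reference:
  assumes M: "\<forall>s\<in>K. card s \<le> M"
  shows "acyclic_matching_ref K (cobd1 K) (\<lambda>s. M - card s) (\<lambda>s. length W - idx s) (critical W)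
    (upper_regular W) (lower_regular W) mate (coreference K W)"
proof -
  interpret acyclic_matching K "cobd1 K" "\<lambda>s. M - card s" "\<lambda>s. length W - idx s" "critical W"
    "upper_regular W" "lower_regular W" mate
    by (rule cohomology_matching[OF M])
  show ?thesis
    by unfold_locales (unfold coreference_def is_coref_eq[OF M], rule is_ref_map_The)
qed

theorem homology_iso: "vs_iso (homology K p) (crit_homology K W p)"
proof -
  interpret acyclic_matching_ref K "bd1 K" card idx "critical W" "lower_regular W"
    "upper_regular W" mate "reference K W"
    by (rule homology_reference)
  have "Kcard K n = {s\<in>K. card s = n}" for n
    by (simp add: Kcard_def)
  then show ?thesis
    using vs_iso_critical[of "p + 1", unfolded cycles_def boundaries_def crit_cycles_def
      crit_boundaries_def]
    unfolding homology_def crit_homology_def bd_def[abs_def] crit_bd_def[abs_def] critical_Int_Kcard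
    by simp
qed

theorem cohomology_iso: "vs_iso (cohomology K p) (crit_cohomology K W p)"
proof -
  text \<open>Any bound \<open>M \<ge> p + 1\<close> on the cardinalities of the simplices will do.\<close>
  define M where "M = p + 1 + card (\<Union>K)"
  have "finite (\<Union>K)"
    using simplicial_complex_finite[OF complex] simplicial_complex_finite_simplex[OF complex] by blast
  then have M: "\<forall>s\<in>K. card s \<le> M"
    unfolding M_def using card_mono[OF _ Union_upper] by fastforce
  interpret acyclic_matching_ref K "cobd1 K" "\<lambda>s. M - card s" "\<lambda>s. length W - idx s" "critical W"
    "upper_regular W" "lower_regular W" mate "coreference K W"
    by (rule cohomology_reference[OF M])
  have "Kcard K (p + 1) = {s\<in>K. M - card s = M - (p + 1)}"
    and "Kcard K p = {s\<in>K. M - card s = Suc (M - (p + 1))}"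
    using M unfolding Kcard_def M_def by force+
  moreover have "critical W \<inter> Kcard K (p + 1) = {s\<in>critical W. M - card s = M - (p + 1)}"
    and "critical W \<inter> Kcard K p = {s\<in>critical W. M - card s = Suc (M - (p + 1))}"
    using calculation critical_regular_subset_K(1) by blast+
  ultimately show ?thesis
    using vs_iso_critical[of "M - (p + 1)", unfolded cycles_def boundaries_def crit_cycles_def
      crit_boundaries_def]
    unfolding cohomology_def crit_cohomology_def cobd_def[abs_def] crit_cobd_def[abs_def]
    by simp
qed

end

theorem theorem10:
  fixes K :: "'a set set" and W :: "'a set set list" and p :: nat
  assumes "simplicial_complex K" and "morse_seq K W"
  shows "vs_iso (homology K p) (crit_homology K W p) \<and>
         vs_iso (cohomology K p) (crit_cohomology K W p)"
proof -
  interpret morse_sequence K W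
    using assms by unfold_locales
  show ?thesis
    using homology_iso cohomology_iso by blast
qed

end
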